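(* (a) For every positive function $\varphi(t)$ and every function $Q(r)$, the metric $$ds^2=-\varphi^3(t)dt^2+\varphi(t)\big([t\,Q(r)+1]^2dr^2+dx^2+dy^2\big)$$ is a plane-symmetric perfect fluid solution with $u=\varphi^{-3/2}\partial_t$, pressure $p=\varphi^{-3}\left[\frac74\frac{\dot\varphi^2}{\varphi^2}-\frac{\ddot\varphi}{\varphi}\right]$ and energy density $\rho=\varphi^{-3}\left[\frac34\frac{\dot\varphi^2}{\varphi^2}+\frac{\dot\varphi Q}{\varphi(tQ+1)}\right]$. (b) Conversely, every solution $(\varphi(t),\alpha(t,r),v(t))$, $v,\varphi>0$, of $2v\varphi\ddot\alpha+(\dot v\varphi+3v\dot\varphi)\dot\alpha=0$ with $\alpha=\alpha_1(t)+\alpha_2(t)Q(r)$, $\alpha_2$ non-constant, defines (via $ds^2=-v^{-1}dt^2+\varphi[\alpha^2dr^2+dx^2+dy^2]$) a metric which, after a change of the time coordinate, constant rescalings of $\varphi$ and of the spatial coordinates, and a redefinition of $r$ and $Q$, takes the form in (a).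
   Context: Dot denotes $d/dt$. The equation in (b) is the perfect fluid field equation for the $k=0$ T-models written in the variables $(\varphi,\alpha,v)$. *)

theory Defs
  imports "HOL-Analysis.Analysis"
begin

text \<open>Spacetime points are vectors in real^4; coordinate indices (type 4):
  0 = t, 1 = r, 2 = x, 3 = y.  Signature (-,+,+,+), units with 8 pi G = 1
  (Einstein equations G_ij = T_ij).\<close>

type_synonym pt = "real^4"
type_synonym metric = "4 \<Rightarrow> 4 \<Rightarrow> pt \<Rightarrow> real"

definition mkpt :: "real \<Rightarrow> real \<Rightarrow> real \<Rightarrow> real \<Rightarrow> pt" where
  "mkpt t r x y = (\<chi> j. if j = 0 then t else if j = 1 then r else if j = 2 then x else y)"

definition tco :: "pt \<Rightarrow> real" where "tco p = p $ 0"
definition rco :: "pt \<Rightarrow> real" where "rco p = p $ 1"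

definition pd :: "4 \<Rightarrow> (pt \<Rightarrow> real) \<Rightarrow> pt \<Rightarrow> real" where
  "pd i f p = deriv (\<lambda>s. f (\<chi> j. if j = i then s else p $ j)) (p $ i)"

definition gmat :: "metric \<Rightarrow> pt \<Rightarrow> real^4^4" where
  "gmat g p = (\<chi> i j. g i j p)"

definition ginv :: "metric \<Rightarrow> 4 \<Rightarrow> 4 \<Rightarrow> pt \<Rightarrow> real" where
  "ginv g i j p = matrix_inv (gmat g p) $ i $ j"

definition christoffel :: "metric \<Rightarrow> 4 \<Rightarrow> 4 \<Rightarrow> 4 \<Rightarrow> pt \<Rightarrow> real" where
  "christoffel g k i j p =
     (1/2) * (\<Sum>l\<in>UNIV. ginv g k l p *
        (pd i (g l j) p + pd j (g l i) p - pd l (g i j) p))"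

definition ricci :: "metric \<Rightarrow> 4 \<Rightarrow> 4 \<Rightarrow> pt \<Rightarrow> real" where
  "ricci g i j p =
     (\<Sum>k\<in>UNIV. pd k (christoffel g k i j) p - pd j (christoffel g k i k) p
        + (\<Sum>l\<in>UNIV. christoffel g k k l p * christoffel g l i j p
                     - christoffel g k j l p * christoffel g l i k p))"

definition scalar_curv :: "metric \<Rightarrow> pt \<Rightarrow> real" where
  "scalar_curv g p = (\<Sum>i\<in>UNIV. \<Sum>j\<in>UNIV. ginv g i j p * ricci g i j p)"

definition einstein :: "metric \<Rightarrow> 4 \<Rightarrow> 4 \<Rightarrow> pt \<Rightarrow> real" where
  "einstein g i j p = ricci g i j p - (1/2) * g i j p * scalar_curv g p"

definition perfect_fluid_solution ::
  "metric \<Rightarrow> pt set \<Rightarrow> (4 \<Rightarrow> pt \<Rightarrow> real) \<Rightarrow> (pt \<Rightarrow> real) \<Rightarrow> (pt \<Rightarrow> real) \<Rightarrow> bool" where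
  "perfect_fluid_solution g U u rho pr \<longleftrightarrow> open U \<and>
     (\<forall>q\<in>U.
        (\<forall>i j. g i j q = g j i q) \<and> det (gmat g q) \<noteq> 0 \<and>
        (\<Sum>i\<in>UNIV. \<Sum>j\<in>UNIV. g i j q * u i q * u j q) = -1 \<and>
        (\<forall>i j. einstein g i j q =
            (rho q + pr q) * (\<Sum>k\<in>UNIV. g i k q * u k q) * (\<Sum>k\<in>UNIV. g j k q * u k q)
            + pr q * g i j q))"

text \<open>Plane symmetry in adapted coordinates (t,r,x,y):
  ds^2 = g_ab(t,r) dx^a dx^b + C(t,r)(dx^2 + dy^2), a,b in {t,r}, on a domain
  invariant under translations in x and y.\<close>
definition plane_symmetric :: "metric \<Rightarrow> pt set \<Rightarrow> bool" where
  "plane_symmetric g U \<longleftrightarrow>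
     (\<forall>q\<in>U. \<forall>a b. (\<chi> j. if j = 2 then a else if j = 3 then b else q $ j) \<in> U) \<and>
     (\<forall>q\<in>U. \<forall>q'\<in>U. q $ 0 = q' $ 0 \<and> q $ 1 = q' $ 1 \<longrightarrow> (\<forall>i j. g i j q = g i j q')) \<and>
     (\<forall>q\<in>U. g 2 2 q = g 3 3 q \<and> g 2 3 q = 0 \<and> g 3 2 q = 0 \<and>
        (\<forall>a\<in>{0,1}. \<forall>b\<in>{2,3}. g a b q = 0 \<and> g b a q = 0))"

definition metricA :: "(real \<Rightarrow> real) \<Rightarrow> (real \<Rightarrow> real) \<Rightarrow> metric" where
  "metricA phi Q i j p =
     (if i \<noteq> j then 0
      else if i = 0 then - ((phi (tco p)) ^ 3)
      else if i = 1 then phi (tco p) * (tco p * Q (rco p) + 1) ^ 2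
      else phi (tco p))"

end

theory Submission
  imports Defs
begin

text \<open>
  (a) The metric is diagonal and depends on \<open>(t, r)\<close> only, so its Christoffel symbols, their
  derivatives and its Ricci tensor are explicit rational functions of \<open>phi\<close>, \<open>Q\<close> and their
  first two derivatives. The Einstein tensor turns out to be diagonal, with \<open>G_tt = rho phi\<^sup>3\<close>
  and \<open>G_kk = p g_kk\<close> for the spatial indices: the perfect-fluid form for the comoving velocity
  \<open>u = phi powr (-3/2) d_t\<close>.

  (b) With \<open>W = phi sqrt (phi v)\<close> the field equation says \<open>d_t (W d_t alpha) = 0\<close>, so
  \<open>W d_t alpha = A(r)\<close>. In the new time \<open>s = S(t)\<close> with \<open>S' = 1 / W\<close> this gives
  \<open>alpha = A(r) s + B(r)\<close>, and \<open>dt\<^sup>2 / v = phi\<^sup>3 ds\<^sup>2\<close>. As \<open>alpha\<close> never vanishes, \<open>B\<close> has a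
  constant sign \<open>sg\<close> on the interval \<open>J\<close>, and the new radial coordinate \<open>H(r)\<close> with
  \<open>H' = sg B\<close> turns \<open>alpha\<^sup>2 dr\<^sup>2\<close> into \<open>(s Q_new + 1)\<^sup>2 dH\<^sup>2\<close> with \<open>Q_new = A / B\<close>.
\<close>

lemma four_eq_zero: "(4::4) = 0"
  by simp

lemma neq_4: "(0::4) \<noteq> 1" "(0::4) \<noteq> 2" "(0::4) \<noteq> 3" "(1::4) \<noteq> 2" "(1::4) \<noteq> 3" "(2::4) \<noteq> 3"
  by simp_all

lemma sum_UNIV_4: "sum f (UNIV :: 4 set) = f 0 + f 1 + f 2 + f (3::4)"
  using sum_4[of f] by (simp add: four_eq_zero ac_simps)

lemma all_4: "(\<forall>i::4. P i) \<longleftrightarrow> P 0 \<and> P 1 \<and> P 2 \<and> P 3"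
  using forall_4[of P] by (auto simp: four_eq_zero)

lemma sum_if_eq_mult:
  fixes f :: "'n::finite \<Rightarrow> 'a::semiring_1"
  shows "(\<Sum>k\<in>UNIV. (if i = k then a else 0) * f k) = a * f i"
proof -
  have "(\<Sum>k\<in>UNIV. (if i = k then a else 0) * f k) = (\<Sum>k\<in>UNIV. if i = k then a * f k else 0)"
    by (rule sum.cong) auto
  then show ?thesis by simp
qed

lemma matrix_inv_eqI:
  fixes A :: "'a::semiring_1^'n^'n"
  assumes AB: "A ** B = mat 1" and BA: "B ** A = mat 1"
  shows "matrix_inv A = B"
proof -
  define C where "C = matrix_inv A"
  have C: "A ** C = mat 1 \<and> C ** A = mat 1"
    unfolding C_def matrix_inv_def by (rule someI[of _ B]) (use AB BA in blast)
  have "C = C ** (A ** B)" by (simp add: AB matrix_mul_rid)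
  also have "\<dots> = (C ** A) ** B" by (simp add: matrix_mul_assoc)
  also have "\<dots> = B" using C by (simp add: matrix_mul_lid)
  finally show ?thesis unfolding C_def .
qed

lemma matrix_inv_diagonal:
  fixes d :: "'n::finite \<Rightarrow> 'a::field"
  assumes "\<And>i. d i \<noteq> 0"
  shows "matrix_inv (\<chi> i j. if i = j then d i else 0) = (\<chi> i j. if i = j then 1 / d i else 0)"
  by (rule matrix_inv_eqI) (simp_all add: matrix_matrix_mult_def mat_def vec_eq_iff sum_if_eq_mult assms)

definition has_partial_tr :: "4 \<Rightarrow> (real \<Rightarrow> real \<Rightarrow> real) \<Rightarrow> real \<Rightarrow> real \<Rightarrow> real \<Rightarrow> bool" where
  "has_partial_tr a G D t r \<longleftrightarrow>
     (if a = 0 then ((\<lambda>s. G s r) has_real_derivative D) (at t)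
      else if a = 1 then ((\<lambda>s. G t s) has_real_derivative D) (at r)
      else D = 0)"

lemma continuous_on_coordinate_line:
  "continuous_on UNIV (\<lambda>s. (\<chi> j. if j = a then s else q $ j) :: real^'n)"
proof (rule continuous_on_vec_lambda)
  show "continuous_on UNIV (\<lambda>s. if i = a then s else q $ i)" for i
    by (cases "i = a") (simp_all add: continuous_on_id)
qed

lemma pd_eq_partial_tr:
  assumes U: "open U" "q \<in> U" and F: "\<And>p. p \<in> U \<Longrightarrow> F p = G (p $ 0) (p $ 1)"
    and G: "has_partial_tr a G D (q $ 0) (q $ 1)"
  shows "pd a F q = D"
proof -
  define line where "line s = (\<chi> j. if j = a then s else q $ j)" for s
  have line_q: "line (q $ a) = q"
    by (simp add: line_def vec_eq_iff)
  have "open (line -` U)"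
    using continuous_on_coordinate_line U(1) unfolding line_def
    by (intro continuous_open_vimage) (auto simp: continuous_on_eq_continuous_at)
  moreover have "q $ a \<in> line -` U"
    using U(2) line_q by simp
  ultimately have "eventually (\<lambda>s. line s \<in> U) (nhds (q $ a))"
    using eventually_nhds_in_open by fastforce
  then have "eventually (\<lambda>s. F (line s) = G (line s $ 0) (line s $ 1)) (nhds (q $ a))"
    by eventually_elim (rule F)
  then have "pd a F q = deriv (\<lambda>s. G (line s $ 0) (line s $ 1)) (q $ a)"
    unfolding pd_def line_def[symmetric] by (rule deriv_cong_ev) simp
  also have "\<dots> = D"
  proof (cases "a = 0 \<or> a = 1")
    case True
    with G show ?thesis
      by (auto simp: has_partial_tr_def line_def neq_4 intro: DERIV_imp_deriv)
  next
    case False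
    with G show ?thesis
      by (simp add: has_partial_tr_def line_def)
  qed
  finally show ?thesis .
qed

lemma has_partial_tr_add:
  "has_partial_tr a F D t r \<Longrightarrow> has_partial_tr a G E t r \<Longrightarrow> has_partial_tr a (\<lambda>x y. F x y + G x y) (D + E) t r"
  unfolding has_partial_tr_def by (auto intro: derivative_intros)

lemma has_partial_tr_diff:
  "has_partial_tr a F D t r \<Longrightarrow> has_partial_tr a G E t r \<Longrightarrow> has_partial_tr a (\<lambda>x y. F x y - G x y) (D - E) t r"
  unfolding has_partial_tr_def by (auto intro: derivative_intros)

lemma has_partial_tr_divide:
  "has_partial_tr a F D t r \<Longrightarrow> has_partial_tr a G E t r \<Longrightarrow> G t r \<noteq> 0 \<Longrightarrow>
   has_partial_tr a (\<lambda>x y. F x y / G x y) ((D * G t r - F t r * E) / (G t r)^2) t r"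
  unfolding has_partial_tr_def power2_eq_square by (auto intro: DERIV_divide)

lemma has_partial_tr_cdivide:
  "has_partial_tr a F D t r \<Longrightarrow> has_partial_tr a (\<lambda>x y. F x y / c) (D / c) t r"
  unfolding has_partial_tr_def by (auto intro: DERIV_cdivide)

lemma has_partial_tr_if:
  "(P \<Longrightarrow> has_partial_tr a F D t r) \<Longrightarrow> has_partial_tr a (\<lambda>x y. if P then F x y else 0) (if P then D else 0) t r"
  unfolding has_partial_tr_def by auto

text \<open>\<open>dG a k\<close> and \<open>ddG a b k\<close> stand for the partial derivatives \<open>d_a G_k\<close> and \<open>d_a d_b G_k\<close>.\<close>

locale diagonal_tr_metric =
  fixes g :: metric and U :: "pt set"
    and G :: "4 \<Rightarrow> real \<Rightarrow> real \<Rightarrow> real"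
    and dG :: "4 \<Rightarrow> 4 \<Rightarrow> real \<Rightarrow> real \<Rightarrow> real"
    and ddG :: "4 \<Rightarrow> 4 \<Rightarrow> 4 \<Rightarrow> real \<Rightarrow> real \<Rightarrow> real"
  assumes open_U: "open U"
    and g_eq: "\<And>p i j. p \<in> U \<Longrightarrow> g i j p = (if i = j then G i (p $ 0) (p $ 1) else 0)"
    and G_nonzero: "\<And>p k. p \<in> U \<Longrightarrow> G k (p $ 0) (p $ 1) \<noteq> 0"
    and G_partial: "\<And>p a k. p \<in> U \<Longrightarrow> has_partial_tr a (G k) (dG a k (p $ 0) (p $ 1)) (p $ 0) (p $ 1)"
    and dG_partial: "\<And>p a b k. p \<in> U \<Longrightarrow> has_partial_tr a (dG b k) (ddG a b k (p $ 0) (p $ 1)) (p $ 0) (p $ 1)"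
begin

definition Gamma1 :: "4 \<Rightarrow> 4 \<Rightarrow> 4 \<Rightarrow> real \<Rightarrow> real \<Rightarrow> real" where
  "Gamma1 k i j t r = ((if k = j then dG i k t r else 0) + (if k = i then dG j k t r else 0)
                       - (if i = j then dG k i t r else 0)) / 2"

definition dGamma1 :: "4 \<Rightarrow> 4 \<Rightarrow> 4 \<Rightarrow> 4 \<Rightarrow> real \<Rightarrow> real \<Rightarrow> real" where
  "dGamma1 a k i j t r = ((if k = j then ddG a i k t r else 0) + (if k = i then ddG a j k t r else 0)
                          - (if i = j then ddG a k i t r else 0)) / 2"

definition Gamma :: "4 \<Rightarrow> 4 \<Rightarrow> 4 \<Rightarrow> real \<Rightarrow> real \<Rightarrow> real" where
  "Gamma k i j t r = Gamma1 k i j t r / G k t r"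

definition dGamma :: "4 \<Rightarrow> 4 \<Rightarrow> 4 \<Rightarrow> 4 \<Rightarrow> real \<Rightarrow> real \<Rightarrow> real" where
  "dGamma a k i j t r =
     (dGamma1 a k i j t r * G k t r - Gamma1 k i j t r * dG a k t r) / (G k t r)^2"

definition Ric :: "4 \<Rightarrow> 4 \<Rightarrow> real \<Rightarrow> real \<Rightarrow> real" where
  "Ric i j t r =
     (\<Sum>k\<in>UNIV. dGamma k k i j t r - dGamma j k i k t r
        + (\<Sum>l\<in>UNIV. Gamma k k l t r * Gamma l i j t r - Gamma k j l t r * Gamma l i k t r))"

definition Scal :: "real \<Rightarrow> real \<Rightarrow> real" where
  "Scal t r = (\<Sum>k\<in>UNIV. Ric k k t r / G k t r)"

lemma ginv_eq:
  assumes p: "p \<in> U"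
  shows "ginv g k l p = (if k = l then 1 / G k (p $ 0) (p $ 1) else 0)"
proof -
  have "gmat g p = (\<chi> i j. if i = j then G i (p $ 0) (p $ 1) else 0)"
    using g_eq[OF p] by (simp add: gmat_def vec_eq_iff)
  then show ?thesis
    unfolding ginv_def by (simp add: matrix_inv_diagonal G_nonzero p)
qed

lemma pd_g_eq:
  assumes p: "p \<in> U"
  shows "pd a (g i j) p = (if i = j then dG a i (p $ 0) (p $ 1) else 0)"
proof (rule pd_eq_partial_tr[OF open_U p, where G = "\<lambda>t r. if i = j then G i t r else 0"])
  show "has_partial_tr a (\<lambda>t r. if i = j then G i t r else 0)
          (if i = j then dG a i (p $ 0) (p $ 1) else 0) (p $ 0) (p $ 1)"
    by (rule has_partial_tr_if) (rule G_partial[OF p])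
qed (simp add: g_eq)

lemma christoffel_eq: "p \<in> U \<Longrightarrow> christoffel g k i j p = Gamma k i j (p $ 0) (p $ 1)"
  unfolding christoffel_def ginv_eq pd_g_eq sum_if_eq_mult Gamma_def Gamma1_def
  by (simp add: field_simps)

lemma pd_christoffel_eq:
  assumes p: "p \<in> U"
  shows "pd a (christoffel g k i j) p = dGamma a k i j (p $ 0) (p $ 1)"
proof (rule pd_eq_partial_tr[OF open_U p, where G = "Gamma k i j"])
  show "has_partial_tr a (Gamma k i j) (dGamma a k i j (p $ 0) (p $ 1)) (p $ 0) (p $ 1)"
    unfolding Gamma_def[abs_def] Gamma1_def[abs_def] dGamma_def dGamma1_def
    by (intro has_partial_tr_divide has_partial_tr_add has_partial_tr_diff has_partial_tr_if
          has_partial_tr_cdivide G_partial[OF p] dG_partial[OF p] G_nonzero[OF p])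
qed (rule christoffel_eq)

lemma ricci_eq: "p \<in> U \<Longrightarrow> ricci g i j p = Ric i j (p $ 0) (p $ 1)"
  unfolding ricci_def Ric_def christoffel_eq pd_christoffel_eq ..

lemma scalar_curv_eq: "p \<in> U \<Longrightarrow> scalar_curv g p = Scal (p $ 0) (p $ 1)"
  unfolding scalar_curv_def Scal_def ginv_eq ricci_eq sum_if_eq_mult by simp

lemma einstein_eq:
  "p \<in> U \<Longrightarrow> einstein g i j p =
     Ric i j (p $ 0) (p $ 1) - (if i = j then G i (p $ 0) (p $ 1) / 2 * Scal (p $ 0) (p $ 1) else 0)"
  unfolding einstein_def ricci_eq scalar_curv_eq g_eq by simp

lemma det_gmat_nonzero: "p \<in> U \<Longrightarrow> det (gmat g p) \<noteq> 0"
  by (subst det_diagonal) (simp_all add: gmat_def g_eq G_nonzero)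

end

lemma open_interval_eq_einterval:
  fixes I :: "real set"
  assumes "open I" and "is_interval I"
  shows "I = einterval (Inf (ereal ` I)) (Sup (ereal ` I))"
proof (intro set_eqI iffI)
  fix x assume x: "x \<in> I"
  obtain e where e: "e > 0" "ball x e \<subseteq> I"
    using assms(1) x open_contains_ball by blast
  then have "x - e/2 \<in> I" "x + e/2 \<in> I"
    by (auto simp: dist_real_def intro!: subsetD[OF e(2)])
  then have "Inf (ereal ` I) \<le> ereal (x - e/2)" "ereal (x + e/2) \<le> Sup (ereal ` I)"
    by (auto intro: INF_lower SUP_upper)
  moreover have "ereal (x - e/2) < ereal x" "ereal x < ereal (x + e/2)"
    using e(1) by simp_all
  ultimately show "x \<in> einterval (Inf (ereal ` I)) (Sup (ereal ` I))"
    unfolding einterval_iff by (meson le_less_trans less_le_trans)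
next
  fix x assume "x \<in> einterval (Inf (ereal ` I)) (Sup (ereal ` I))"
  then obtain y z where "y \<in> I" "z \<in> I" "y < x" "x < z"
    by (auto simp: einterval_iff Inf_less_iff less_Sup_iff)
  with assms(2) show "x \<in> I"
    unfolding is_interval_1 by (meson less_imp_le)
qed

lemma exists_antiderivative:
  fixes g :: "real \<Rightarrow> real"
  assumes "open I" and "is_interval I" and "continuous_on I g"
  shows "\<exists>F. \<forall>x\<in>I. (F has_real_derivative g x) (at x)"
proof (cases "I = {}")
  case False
  define a b where "a = Inf (ereal ` I)" and "b = Sup (ereal ` I)"
  have I: "I = einterval a b"
    unfolding a_def b_def using assms(1,2) by (rule open_interval_eq_einterval)
  with False have "a < b"
    by (auto simp: einterval_iff)
  moreover have "isCont g x" if "a < ereal x" "x < b" for x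
    using that assms(1,3) I by (simp add: einterval_iff continuous_on_eq_continuous_at)
  ultimately obtain F where F: "\<forall>x. a < ereal x \<longrightarrow> ereal x < b \<longrightarrow> (F has_vector_derivative g x) (at x)"
    using einterval_antiderivative[of a b g] by auto
  show ?thesis
    by (rule exI[of _ F]) (use F I in \<open>auto simp: einterval_iff has_real_derivative_iff_has_vector_derivative\<close>)
qed simp

lemma inverse_of_positive_derivative:
  fixes S S' :: "real \<Rightarrow> real"
  assumes I: "open I" "is_interval I"
    and S: "\<And>x. x \<in> I \<Longrightarrow> (S has_real_derivative S' x) (at x)"
    and pos: "\<And>x. x \<in> I \<Longrightarrow> S' x > 0"
  shows "inj_on S I" and "open (S ` I)"
    and "\<And>x. x \<in> I \<Longrightarrow> (the_inv_into I S has_real_derivative inverse (S' x)) (at (S x))"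
proof -
  have cont: "continuous_on I S"
    using S by (intro continuous_at_imp_continuous_on ballI DERIV_isCont)
  have mono: "S x < S y" if "x \<in> I" "y \<in> I" "x < y" for x y
  proof (rule DERIV_pos_imp_increasing[OF \<open>x < y\<close>])
    fix z assume "x \<le> z" "z \<le> y"
    with I(2) that have "z \<in> I"
      unfolding is_interval_1 by blast
    then show "\<exists>D. (S has_real_derivative D) (at z) \<and> D > 0"
      using S pos by blast
  qed
  show inj: "inj_on S I"
    by (rule inj_onI) (metis mono less_irrefl linorder_neqE_linordered_idom)
  show "open (S ` I)"
    using cont I(1) inj by (rule invariance_of_domain)
  have inv_cont: "continuous_on (S ` I) (the_inv_into I S)"
    using I(1) cont inj by (intro continuous_on_inverse_open) (auto simp: the_inv_into_f_f)
  fix x assume x: "x \<in> I"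
  show "(the_inv_into I S has_real_derivative inverse (S' x)) (at (S x))"
  proof (rule has_field_derivative_inverse_basic)
    show "(S has_real_derivative S' x) (at (the_inv_into I S (S x)))"
      using x inj S by (simp add: the_inv_into_f_f)
    show "continuous (at (S x)) (the_inv_into I S)"
      using inv_cont \<open>open (S ` I)\<close> x by (simp add: continuous_on_eq_continuous_at)
    show "S' x \<noteq> 0"
      using pos[OF x] by simp
    show "S x \<in> S ` I"
      using x by simp
    show "S (the_inv_into I S z) = z" if "z \<in> S ` I" for z
      using inj that by (auto simp: f_the_inv_into_f)
  qed fact
qed

lemma continuous_nonvanishing_constant_sign:
  fixes B :: "real \<Rightarrow> real"
  assumes J: "is_interval J" and B: "continuous_on J B" and nz: "\<And>r. r \<in> J \<Longrightarrow> B r \<noteq> 0"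
    and r: "r0 \<in> J" "r \<in> J"
  shows "0 < sgn (B r0) * B r"
proof (rule ccontr)
  assume "\<not> 0 < sgn (B r0) * B r"
  with nz r have "min (B r0) (B r) \<le> 0" "0 \<le> max (B r0) (B r)"
    by (auto simp: sgn_if split: if_splits)
  moreover have "min (B r0) (B r) \<in> B ` J" "max (B r0) (B r) \<in> B ` J"
    using r by (simp_all add: min_def max_def)
  moreover have "is_interval (B ` J)"
    unfolding is_interval_connected_1
    using B J by (intro connected_continuous_image) (simp_all add: is_interval_connected)
  ultimately have "0 \<in> B ` J"
    unfolding is_interval_1 by (meson image_iff)
  then show False
    using nz by force
qed

lemma DERIV_compose_differentiable:
  assumes F: "(F has_real_derivative F' (h x)) (at (h x))" and F': "F' differentiable (at (h x))"
    and h: "(h has_real_derivative k (h x)) (at x)" and k: "k differentiable (at (h x))"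
  shows "((\<lambda>x. F (h x)) has_real_derivative F' (h x) * k (h x)) (at x)"
    and "(\<lambda>x. F' (h x) * k (h x)) differentiable (at x)"
proof -
  show "((\<lambda>x. F (h x)) has_real_derivative F' (h x) * k (h x)) (at x)"
    using F h by (rule DERIV_chain2)
  have "h differentiable (at x)"
    using h real_differentiable_def by blast
  show "(\<lambda>x. F' (h x) * k (h x)) differentiable (at x)"
    by (intro differentiable_mult differentiable_compose[of F' h] differentiable_compose[of k h]
          F' k \<open>h differentiable (at x)\<close>)
qed

lemma ode_first_integral:
  fixes phi v y :: "real \<Rightarrow> real"
  assumes phi: "0 < phi t" and v: "0 < v t"
    and derivs: "(phi has_real_derivative phi') (at t)" "(v has_real_derivative v') (at t)"
      "(y has_real_derivative y') (at t)"
    and ode: "2 * v t * phi t * y' + (v' * phi t + 3 * v t * phi') * y t = 0"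
  shows "((\<lambda>t. y t * (phi t * sqrt (phi t * v t))) has_real_derivative 0) (at t)"
proof -
  define s where "s = sqrt (phi t * v t)"
  have "phi t * v t > 0"
    using phi v by simp
  then have s: "s > 0" "s * s = phi t * v t"
    by (simp_all add: s_def)
  have "((\<lambda>t. y t * (phi t * sqrt (phi t * v t))) has_real_derivative
          y' * (phi t * s) + y t * (phi' * s + phi t * ((phi' * v t + phi t * v') / (2 * s)))) (at t)"
    using derivs \<open>phi t * v t > 0\<close> unfolding s_def
    by (auto intro!: derivative_eq_intros simp: field_simps)
  moreover have "y' * (phi t * s) + y t * (phi' * s + phi t * ((phi' * v t + phi t * v') / (2 * s)))
      = phi t * (2 * v t * phi t * y' + (v' * phi t + 3 * v t * phi') * y t) / (2 * s)"
    using s by (simp add: field_simps) algebra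
  ultimately show ?thesis
    by (simp add: ode)
qed

locale metricA_data =
  fixes I J :: "real set" and phi phi' phi'' Q Q' Q'' :: "real \<Rightarrow> real"
  assumes open_I: "open I" and open_J: "open J"
    and phi_pos: "\<And>t. t \<in> I \<Longrightarrow> 0 < phi t"
    and phi_deriv: "\<And>t. t \<in> I \<Longrightarrow> (phi has_real_derivative phi' t) (at t)"
    and phi'_deriv: "\<And>t. t \<in> I \<Longrightarrow> (phi' has_real_derivative phi'' t) (at t)"
    and Q_deriv: "\<And>r. r \<in> J \<Longrightarrow> (Q has_real_derivative Q' r) (at r)"
    and Q'_deriv: "\<And>r. r \<in> J \<Longrightarrow> (Q' has_real_derivative Q'' r) (at r)"
begin

definition G :: "4 \<Rightarrow> real \<Rightarrow> real \<Rightarrow> real" where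
  "G k t r = (if k = 0 then - (phi t ^ 3) else if k = 1 then phi t * (t * Q r + 1)^2 else phi t)"

definition dG :: "4 \<Rightarrow> 4 \<Rightarrow> real \<Rightarrow> real \<Rightarrow> real" where
  "dG a k t r =
     (if a = 0 then
        (if k = 0 then - (3 * phi t ^ 2 * phi' t)
         else if k = 1 then phi' t * (t * Q r + 1)^2 + 2 * phi t * (t * Q r + 1) * Q r
         else phi' t)
      else if a = 1 \<and> k = 1 then 2 * phi t * (t * Q r + 1) * t * Q' r
      else 0)"

definition ddG :: "4 \<Rightarrow> 4 \<Rightarrow> 4 \<Rightarrow> real \<Rightarrow> real \<Rightarrow> real" where
  "ddG a b k t r =
     (if a = 0 \<and> b = 0 then
        (if k = 0 then - (6 * phi t * phi' t ^ 2 + 3 * phi t ^ 2 * phi'' t)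
         else if k = 1 then phi'' t * (t * Q r + 1)^2 + 4 * phi' t * (t * Q r + 1) * Q r + 2 * phi t * Q r ^ 2
         else phi'' t)
      else if k = 1 \<and> (a = 0 \<and> b = 1 \<or> a = 1 \<and> b = 0) then
        2 * Q' r * (phi' t * (t * Q r + 1) * t + phi t * (2 * t * Q r + 1))
      else if a = 1 \<and> b = 1 \<and> k = 1 then 2 * phi t * t * (t * Q' r ^ 2 + (t * Q r + 1) * Q'' r)
      else 0)"

definition U :: "pt set" where
  "U = {q. tco q \<in> I \<and> rco q \<in> J \<and> tco q * Q (rco q) + 1 \<noteq> 0}"

lemma mem_U: "q \<in> U \<longleftrightarrow> q $ 0 \<in> I \<and> q $ 1 \<in> J \<and> q $ 0 * Q (q $ 1) + 1 \<noteq> 0"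
  by (simp add: U_def tco_def rco_def)

lemma open_U: "open U"
proof -
  define S where "S = (\<lambda>q::pt. q $ 0) -` I \<inter> (\<lambda>q. q $ 1) -` J"
  have Q: "continuous_on J Q"
    using Q_deriv by (intro continuous_at_imp_continuous_on ballI DERIV_isCont)
  have "continuous_on S (\<lambda>q. q $ 0 * Q (q $ 1) + 1)"
    unfolding S_def by (intro continuous_intros continuous_on_compose2[OF Q]) auto
  moreover have "open S"
    unfolding S_def using open_I open_J by (intro open_Int open_vimage_vec_nth)
  ultimately have "open (S \<inter> (\<lambda>q. q $ 0 * Q (q $ 1) + 1) -` (- {0}))"
    by (rule continuous_open_preimage) auto
  moreover have "S \<inter> (\<lambda>q. q $ 0 * Q (q $ 1) + 1) -` (- {0}) = U"
    unfolding S_def by (auto simp: mem_U)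
  ultimately show ?thesis by simp
qed

lemma metricA_eq: "metricA phi Q i j p = (if i = j then G i (p $ 0) (p $ 1) else 0)"
  by (simp add: metricA_def G_def tco_def rco_def)

sublocale diagonal_tr_metric "metricA phi Q" U G dG ddG
proof
  fix p a b and k :: 4
  assume "p \<in> U"
  then have t: "p $ 0 \<in> I" and r: "p $ 1 \<in> J" and T: "p $ 0 * Q (p $ 1) + 1 \<noteq> 0"
    by (simp_all add: mem_U)
  show "G k (p $ 0) (p $ 1) \<noteq> 0"
    using phi_pos[OF t] T by (simp add: G_def)
  show "has_partial_tr a (G k) (dG a k (p $ 0) (p $ 1)) (p $ 0) (p $ 1)"
    unfolding has_partial_tr_def G_def dG_def
    using t r by (auto simp: neq_4 intro!: derivative_eq_intros phi_deriv Q_deriv)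
  show "has_partial_tr a (dG b k) (ddG a b k (p $ 0) (p $ 1)) (p $ 0) (p $ 1)"
    unfolding has_partial_tr_def dG_def ddG_def
    using t r
    by (auto simp: neq_4 intro!: derivative_eq_intros phi_deriv phi'_deriv Q_deriv Q'_deriv)
       (simp_all add: algebra_simps power2_eq_square)
qed (simp_all add: open_U metricA_eq)

definition ricci_tt :: "real \<Rightarrow> real \<Rightarrow> real" where
  "ricci_tt t r = - 3/2 * phi'' t / phi t + 3 * (phi' t / phi t)^2 + phi' t * Q r / (2 * phi t * (t * Q r + 1))"

definition ricci_xx :: "real \<Rightarrow> real \<Rightarrow> real" where
  "ricci_xx t r = phi'' t / (2 * phi t ^ 3) - phi' t ^ 2 / (2 * phi t ^ 4)
                  + phi' t * Q r / (2 * phi t ^ 3 * (t * Q r + 1))"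

lemma Ric_closed_form:
  assumes phi: "phi t > 0" and T: "t * Q r + 1 \<noteq> 0"
  shows "Ric i j t r =
    (if i \<noteq> j then 0 else if i = 0 then ricci_tt t r
     else if i = 1 then (t * Q r + 1)^2 * ricci_xx t r else ricci_xx t r)"
proof -
  \<comment> \<open>Treating \<open>t * Q r + 1\<close> as an atom keeps the normalisation of these rational expressions small.\<close>
  define T where "T = t * Q r + 1"
  have "T \<noteq> 0"
    using T by (simp add: T_def)
  have "\<forall>i j. Ric i j t r =
    (if i \<noteq> j then 0 else if i = 0 then ricci_tt t r
     else if i = 1 then T^2 * ricci_xx t r else ricci_xx t r)"
    unfolding all_4 Ric_def sum_UNIV_4 dGamma_def Gamma_def Gamma1_def dGamma1_def
      G_def dG_def ddG_def ricci_tt_def ricci_xx_def T_def[symmetric]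
    using phi \<open>T \<noteq> 0\<close>
    apply (intro conjI)
    apply (simp_all add: neq_4 neq_4[symmetric] field_simps power2_eq_square power3_eq_cube)
    apply algebra+
    done
  then show ?thesis
    unfolding T_def by blast
qed

definition velocity :: "4 \<Rightarrow> pt \<Rightarrow> real" where
  "velocity i q = (if i = 0 then phi (tco q) powr (-3/2) else 0)"

definition energy_density :: "real \<Rightarrow> real \<Rightarrow> real" where
  "energy_density t r =
     phi t powr (-3) * (3/4 * (phi' t)^2 / (phi t)^2 + phi' t * Q r / (phi t * (t * Q r + 1)))"

definition pressure :: "real \<Rightarrow> real" where
  "pressure t = phi t powr (-3) * (7/4 * (phi' t)^2 / (phi t)^2 - phi'' t / phi t)"

lemma Scal_closed_form:
  assumes "phi t > 0" and "t * Q r + 1 \<noteq> 0"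
  shows "Scal t r = 3 * ricci_xx t r / phi t - ricci_tt t r / phi t ^ 3"
  unfolding Scal_def sum_UNIV_4 Ric_closed_form[OF assms] G_def
  using assms by (simp add: neq_4 neq_4[symmetric] field_simps)

lemma einstein_closed_form:
  assumes p: "p \<in> U"
  shows "einstein (metricA phi Q) i j p =
    (if i \<noteq> j then 0 else if i = 0 then phi (p $ 0) ^ 3 * energy_density (p $ 0) (p $ 1)
     else pressure (p $ 0) * G i (p $ 0) (p $ 1))"
proof -
  define t r where "t = p $ 0" and "r = p $ 1"
  have phi: "phi t > 0" and T: "t * Q r + 1 \<noteq> 0"
    using p phi_pos by (auto simp: mem_U t_def r_def)
  define T where "T = t * Q r + 1"
  have "T \<noteq> 0"
    using T by (simp add: T_def)
  have tt: "ricci_tt t r + phi t ^ 3 / 2 * Scal t r = phi t ^ 3 * energy_density t r"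
    unfolding Scal_closed_form[OF phi T] ricci_tt_def ricci_xx_def energy_density_def T_def[symmetric]
    using phi \<open>T \<noteq> 0\<close> by (simp add: powr_neg_numeral field_simps) algebra
  have xx: "ricci_xx t r - phi t / 2 * Scal t r = pressure t * phi t"
    unfolding Scal_closed_form[OF phi T] ricci_tt_def ricci_xx_def pressure_def T_def[symmetric]
    using phi \<open>T \<noteq> 0\<close> by (simp add: powr_neg_numeral field_simps) algebra
  have "\<forall>i j. einstein (metricA phi Q) i j p =
    (if i \<noteq> j then 0 else if i = 0 then phi t ^ 3 * energy_density t r else pressure t * G i t r)"
    unfolding all_4 einstein_eq[OF p] Ric_closed_form[OF phi T] t_def[symmetric] r_def[symmetric]
    using tt xx by (simp add: G_def neq_4 neq_4[symmetric] algebra_simps)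
  then show ?thesis
    unfolding t_def r_def by blast
qed

lemma metricA_plane_symmetric: "plane_symmetric (metricA phi Q) U"
  unfolding plane_symmetric_def by (auto simp: mem_U metricA_eq G_def neq_4 neq_4[symmetric])

lemma metricA_perfect_fluid:
  "perfect_fluid_solution (metricA phi Q) U velocity
     (\<lambda>q. energy_density (tco q) (rco q)) (\<lambda>q. pressure (tco q))"
  unfolding perfect_fluid_solution_def
proof (intro conjI ballI allI open_U)
  fix q assume q: "q \<in> U"
  define t r where "t = q $ 0" and "r = q $ 1"
  have tr: "tco q = t" "rco q = r"
    by (simp_all add: tco_def rco_def t_def r_def)
  have phi: "phi t > 0"
    using q phi_pos by (simp add: mem_U t_def)
  have u_sq: "phi t powr (-3/2) * phi t powr (-3/2) = 1 / phi t ^ 3"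
    using phi by (simp add: powr_add[symmetric] powr_neg_numeral)
  have lower_u: "(\<Sum>k\<in>UNIV. metricA phi Q i k q * velocity k q)
                   = (if i = 0 then - (phi t ^ 3 * phi t powr (-3/2)) else 0)" for i
    by (simp add: metricA_eq sum_if_eq_mult velocity_def tr G_def t_def)
  fix i j
  show "metricA phi Q i j q = metricA phi Q j i q"
    by (simp add: metricA_eq)
  show "det (gmat (metricA phi Q) q) \<noteq> 0"
    using q by (rule det_gmat_nonzero)
  show "(\<Sum>i\<in>UNIV. \<Sum>j\<in>UNIV. metricA phi Q i j q * velocity i q * velocity j q) = -1"
    using phi u_sq by (simp add: sum_UNIV_4 metricA_eq neq_4 velocity_def G_def tr t_def mult.assoc)
  show "einstein (metricA phi Q) i j q =
     (energy_density (tco q) (rco q) + pressure (tco q))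
     * (\<Sum>k\<in>UNIV. metricA phi Q i k q * velocity k q) * (\<Sum>k\<in>UNIV. metricA phi Q j k q * velocity k q)
     + pressure (tco q) * metricA phi Q i j q"
    unfolding lower_u
    unfolding einstein_closed_form[OF q] metricA_eq tr t_def[symmetric] r_def[symmetric]
    using phi u_sq by (simp add: G_def algebra_simps power3_eq_cube)
qed

end

locale T_model =
  fixes I J :: "real set"
    and phi phi' phi'' v v' a1 a1' a1'' a2 a2' a2'' Q Q' Q'' :: "real \<Rightarrow> real"
  assumes open_I: "open I" and interval_I: "is_interval I" and I_nonempty: "I \<noteq> {}"
    and open_J: "open J" and interval_J: "is_interval J" and J_nonempty: "J \<noteq> {}"
    and phi_pos: "\<And>t. t \<in> I \<Longrightarrow> 0 < phi t" and v_pos: "\<And>t. t \<in> I \<Longrightarrow> 0 < v t"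
    and phi_deriv: "\<And>t. t \<in> I \<Longrightarrow> (phi has_real_derivative phi' t) (at t)"
    and phi'_deriv: "\<And>t. t \<in> I \<Longrightarrow> (phi' has_real_derivative phi'' t) (at t)"
    and v_deriv: "\<And>t. t \<in> I \<Longrightarrow> (v has_real_derivative v' t) (at t)"
    and a1_deriv: "\<And>t. t \<in> I \<Longrightarrow> (a1 has_real_derivative a1' t) (at t)"
    and a1'_deriv: "\<And>t. t \<in> I \<Longrightarrow> (a1' has_real_derivative a1'' t) (at t)"
    and a2_deriv: "\<And>t. t \<in> I \<Longrightarrow> (a2 has_real_derivative a2' t) (at t)"
    and a2'_deriv: "\<And>t. t \<in> I \<Longrightarrow> (a2' has_real_derivative a2'' t) (at t)"
    and Q_deriv: "\<And>r. r \<in> J \<Longrightarrow> (Q has_real_derivative Q' r) (at r)"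
    and Q'_deriv: "\<And>r. r \<in> J \<Longrightarrow> (Q' has_real_derivative Q'' r) (at r)"
    and field_equation: "\<And>t r. t \<in> I \<Longrightarrow> r \<in> J \<Longrightarrow>
          2 * v t * phi t * (a1'' t + a2'' t * Q r)
          + (v' t * phi t + 3 * v t * phi' t) * (a1' t + a2' t * Q r) = 0"
    and alpha_nonzero: "\<And>t r. t \<in> I \<Longrightarrow> r \<in> J \<Longrightarrow> a1 t + a2 t * Q r \<noteq> 0"
begin

definition W :: "real \<Rightarrow> real" where
  "W t = phi t * sqrt (phi t * v t)"

lemma W_pos: "t \<in> I \<Longrightarrow> 0 < W t"
  by (simp add: W_def phi_pos v_pos)

lemma W_differentiable:
  assumes "t \<in> I"
  shows "W differentiable (at t)"
proof -
  have "phi t * v t > 0"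
    using assms phi_pos v_pos by simp
  have "\<exists>D. (W has_real_derivative D) (at t)"
    unfolding W_def[abs_def]
    by (rule exI) (use \<open>phi t * v t > 0\<close> in \<open>auto intro!: derivative_eq_intros phi_deriv v_deriv assms\<close>)
  then show ?thesis
    by (simp add: real_differentiable_def)
qed

definition t0 :: real where "t0 = (SOME t. t \<in> I)"
definition r0 :: real where "r0 = (SOME r. r \<in> J)"

lemma t0_in_I: "t0 \<in> I"
  unfolding t0_def using I_nonempty by (simp add: some_in_eq)

lemma r0_in_J: "r0 \<in> J"
  unfolding r0_def using J_nonempty by (simp add: some_in_eq)

definition A :: "real \<Rightarrow> real" where "A r = (a1' t0 + a2' t0 * Q r) * W t0"
definition B :: "real \<Rightarrow> real" where "B r = a1 t0 + a2 t0 * Q r"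

lemma constant_on_I:
  assumes "\<And>t. t \<in> I \<Longrightarrow> (F has_real_derivative 0) (at t)" and "t \<in> I"
  shows "F t = F t0"
proof -
  obtain c where "\<forall>x\<in>I. F x = c"
    using has_field_derivative_zero_constant[of I F] interval_I assms(1)
    by (auto simp: is_interval_convex_1 intro: has_field_derivative_at_within)
  then show ?thesis
    using assms(2) t0_in_I by simp
qed

lemma first_integral:
  assumes "r \<in> J" "t \<in> I"
  shows "(a1' t + a2' t * Q r) * W t = A r"
proof -
  have "((\<lambda>t. (a1' t + a2' t * Q r) * W t) has_real_derivative 0) (at t)" if "t \<in> I" for t
    unfolding W_def using that assms(1)
    by (intro ode_first_integral[where phi' = "phi' t" and v' = "v' t" and y' = "a1'' t + a2'' t * Q r"]
          phi_pos v_pos phi_deriv v_deriv field_equation derivative_eq_intros)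
       (auto intro: a1'_deriv a2'_deriv)
  from constant_on_I[OF this assms(2)] show ?thesis
    by (simp add: A_def)
qed

definition S :: "real \<Rightarrow> real" where
  "S = (SOME S. (\<forall>t\<in>I. (S has_real_derivative 1 / W t) (at t)) \<and> S t0 = 0)"

lemma S_deriv: "t \<in> I \<Longrightarrow> (S has_real_derivative 1 / W t) (at t)" and S_t0: "S t0 = 0"
proof -
  have "continuous_on I (\<lambda>t. 1 / W t)"
    using W_differentiable W_pos
    by (intro continuous_at_imp_continuous_on ballI continuous_intros differentiable_imp_continuous_within)
       (auto simp: less_imp_neq[symmetric])
  then obtain F where "\<forall>t\<in>I. (F has_real_derivative 1 / W t) (at t)"
    using exists_antiderivative open_I interval_I by blast
  then have "\<exists>S. (\<forall>t\<in>I. (S has_real_derivative 1 / W t) (at t)) \<and> S t0 = 0"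
    by (intro exI[of _ "\<lambda>t. F t - F t0"]) (auto intro!: derivative_eq_intros)
  then have "(\<forall>t\<in>I. (S has_real_derivative 1 / W t) (at t)) \<and> S t0 = 0"
    unfolding S_def by (rule someI_ex)
  then show "t \<in> I \<Longrightarrow> (S has_real_derivative 1 / W t) (at t)" and "S t0 = 0"
    by auto
qed

lemma alpha_linear_in_S:
  assumes "r \<in> J" "t \<in> I"
  shows "a1 t + a2 t * Q r = A r * S t + B r"
proof -
  have "((\<lambda>t. a1 t + a2 t * Q r - A r * S t) has_real_derivative 0) (at t)" if "t \<in> I" for t
  proof -
    have "((\<lambda>t. a1 t + a2 t * Q r - A r * S t) has_real_derivative
            a1' t + a2' t * Q r - A r * (1 / W t)) (at t)"
      using that by (auto intro!: derivative_eq_intros a1_deriv a2_deriv S_deriv)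
    moreover have "a1' t + a2' t * Q r - A r * (1 / W t) = 0"
      using first_integral[OF assms(1) that] W_pos[OF that] by (simp add: field_simps)
    ultimately show ?thesis by simp
  qed
  from constant_on_I[OF this assms(2)] show ?thesis
    by (simp add: S_t0 B_def)
qed

lemma B_nonzero: "r \<in> J \<Longrightarrow> B r \<noteq> 0"
  unfolding B_def using alpha_nonzero t0_in_I by blast

lemma B_deriv: "r \<in> J \<Longrightarrow> (B has_real_derivative a2 t0 * Q' r) (at r)"
  unfolding B_def[abs_def] by (auto intro!: derivative_eq_intros Q_deriv)

lemma A_deriv: "r \<in> J \<Longrightarrow> (A has_real_derivative a2' t0 * Q' r * W t0) (at r)"
  unfolding A_def[abs_def] by (auto intro!: derivative_eq_intros Q_deriv)

definition sg :: real where "sg = sgn (B r0)"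

lemma sg_B_pos: "r \<in> J \<Longrightarrow> 0 < sg * B r"
  unfolding sg_def using interval_J B_nonzero r0_in_J
  by (intro continuous_nonvanishing_constant_sign continuous_at_imp_continuous_on ballI
        DERIV_isCont[OF B_deriv]) auto

lemma sg_square: "sg * sg = 1"
  using B_nonzero[OF r0_in_J] by (auto simp: sg_def sgn_if)

definition H :: "real \<Rightarrow> real" where
  "H = (SOME H. \<forall>r\<in>J. (H has_real_derivative sg * B r) (at r))"

lemma H_deriv: "r \<in> J \<Longrightarrow> (H has_real_derivative sg * B r) (at r)"
proof -
  have "\<exists>H. \<forall>r\<in>J. (H has_real_derivative sg * B r) (at r)"
    using open_J interval_J
    by (rule exists_antiderivative)
       (auto intro!: continuous_at_imp_continuous_on continuous_intros DERIV_isCont[OF B_deriv])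
  then have "\<forall>r\<in>J. (H has_real_derivative sg * B r) (at r)"
    unfolding H_def by (rule someI_ex)
  then show "r \<in> J \<Longrightarrow> (H has_real_derivative sg * B r) (at r)"
    by blast
qed

definition f :: "real \<Rightarrow> real" where "f = the_inv_into I S"
definition h :: "real \<Rightarrow> real" where "h = the_inv_into J H"

lemma time_change:
  shows "open (S ` I)" and "bij_betw f (S ` I) I"
    and "\<And>s. s \<in> S ` I \<Longrightarrow> f s \<in> I" and "\<And>s. s \<in> S ` I \<Longrightarrow> S (f s) = s"
    and "\<And>s. s \<in> S ` I \<Longrightarrow> (f has_real_derivative W (f s)) (at s)"
proof -
  have pos: "\<And>t. t \<in> I \<Longrightarrow> 0 < 1 / W t"
    using W_pos by simp
  note inv = inverse_of_positive_derivative[where S' = "\<lambda>t. 1 / W t", OF open_I interval_I S_deriv pos,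
      folded f_def]
  show "open (S ` I)"
    using inv(2) .
  show "bij_betw f (S ` I) I"
    unfolding f_def by (rule bij_betw_the_inv_into[OF inj_on_imp_bij_betw[OF inv(1)]])
  show "f s \<in> I" and "S (f s) = s" if "s \<in> S ` I" for s
    using that inv(1) by (auto simp: f_def the_inv_into_f_f)
  show "(f has_real_derivative W (f s)) (at s)" if "s \<in> S ` I" for s
    using that inv(1) inv(3) W_pos by (auto simp: f_def the_inv_into_f_f)
qed

lemma radial_change:
  shows "open (H ` J)" and "bij_betw h (H ` J) J" and "\<And>\<rho>. \<rho> \<in> H ` J \<Longrightarrow> h \<rho> \<in> J"
    and "\<And>\<rho>. \<rho> \<in> H ` J \<Longrightarrow> (h has_real_derivative inverse (sg * B (h \<rho>))) (at \<rho>)"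
proof -
  note inv = inverse_of_positive_derivative[where S' = "\<lambda>r. sg * B r", OF open_J interval_J H_deriv sg_B_pos,
      folded h_def]
  show "open (H ` J)"
    using inv(2) .
  show "bij_betw h (H ` J) J"
    unfolding h_def by (rule bij_betw_the_inv_into[OF inj_on_imp_bij_betw[OF inv(1)]])
  show "h \<rho> \<in> J" if "\<rho> \<in> H ` J" for \<rho>
    using that inv(1) by (auto simp: h_def the_inv_into_f_f)
  show "(h has_real_derivative inverse (sg * B (h \<rho>))) (at \<rho>)" if "\<rho> \<in> H ` J" for \<rho>
    using that inv(1) inv(3) by (auto simp: h_def the_inv_into_f_f)
qed

definition ratio :: "real \<Rightarrow> real" where "ratio r = A r / B r"

definition ratio' :: "real \<Rightarrow> real" where
  "ratio' r = (a2' t0 * Q' r * W t0 * B r - A r * (a2 t0 * Q' r)) / (B r)^2"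

lemma ratio_deriv: "r \<in> J \<Longrightarrow> (ratio has_real_derivative ratio' r) (at r)"
  unfolding ratio_def[abs_def] ratio'_def
  by (auto intro!: derivative_eq_intros A_deriv B_deriv B_nonzero simp: power2_eq_square)

lemma phi'_differentiable: "t \<in> I \<Longrightarrow> phi' differentiable (at t)"
  using phi'_deriv real_differentiable_def by blast

lemma Q'_differentiable: "r \<in> J \<Longrightarrow> Q' differentiable (at r)"
  using Q'_deriv real_differentiable_def by blast

lemma ratio'_differentiable:
  assumes "r \<in> J"
  shows "ratio' differentiable (at r)"
proof -
  have "A differentiable (at r)" "B differentiable (at r)"
    using A_deriv[OF assms] B_deriv[OF assms] real_differentiable_def by blast+
  then show ?thesis
    unfolding ratio'_def[abs_def]
    using B_nonzero[OF assms] by (intro derivative_intros Q'_differentiable assms) auto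
qed

lemma metric_time_component:
  assumes "s \<in> S ` I"
  shows "(deriv f s)^2 / v (f s) = phi (f s) ^ 3"
proof -
  have "deriv f s = phi (f s) * sqrt (phi (f s) * v (f s))"
    using time_change(5)[OF assms] by (simp add: DERIV_imp_deriv W_def)
  moreover have "0 < phi (f s)" "0 < v (f s)"
    using phi_pos v_pos time_change(3)[OF assms] by auto
  ultimately have "(deriv f s)^2 = phi (f s) ^ 3 * v (f s)"
    by (simp add: power_mult_distrib power2_eq_square power3_eq_cube)
  with \<open>0 < v (f s)\<close> show ?thesis
    by simp
qed

lemma metric_radial_component:
  assumes "s \<in> S ` I" "\<rho> \<in> H ` J"
  shows "(a1 (f s) + a2 (f s) * Q (h \<rho>))^2 * (deriv h \<rho>)^2 = (s * ratio (h \<rho>) + 1)^2"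
proof -
  have "a1 (f s) + a2 (f s) * Q (h \<rho>) = A (h \<rho>) * s + B (h \<rho>)"
    using alpha_linear_in_S[of "h \<rho>" "f s"] time_change(3,4)[OF assms(1)] radial_change(3)[OF assms(2)]
    by simp
  moreover have "deriv h \<rho> = inverse (sg * B (h \<rho>))"
    using radial_change(4)[OF assms(2)] by (rule DERIV_imp_deriv)
  ultimately show ?thesis
    using B_nonzero[OF radial_change(3)[OF assms(2)]] sg_square
    by (simp add: ratio_def power2_eq_square field_simps)
qed

lemma inverse_sg_B_differentiable: "r \<in> J \<Longrightarrow> (\<lambda>r. inverse (sg * B r)) differentiable (at r)"
  using B_deriv sg_B_pos real_differentiable_def by (intro derivative_intros) fastforce+

lemma time_change_differentiable: "\<forall>s\<in>S ` I. f differentiable (at s) \<and> deriv f s \<noteq> 0"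
  using time_change(3,5) W_pos DERIV_imp_deriv real_differentiable_def by fastforce

lemma radial_change_differentiable: "\<forall>\<rho>\<in>H ` J. h differentiable (at \<rho>) \<and> deriv h \<rho> \<noteq> 0"
proof
  fix \<rho> assume "\<rho> \<in> H ` J"
  with radial_change(3,4) have "(h has_real_derivative inverse (sg * B (h \<rho>))) (at \<rho>)"
    and "sg * B (h \<rho>) > 0"
    using sg_B_pos by auto
  then show "h differentiable (at \<rho>) \<and> deriv h \<rho> \<noteq> 0"
    using DERIV_imp_deriv real_differentiable_def by fastforce
qed

definition phiN :: "real \<Rightarrow> real" where "phiN s = phi (f s)"
definition phiN' :: "real \<Rightarrow> real" where "phiN' s = phi' (f s) * W (f s)"
definition QN :: "real \<Rightarrow> real" where "QN \<rho> = ratio (h \<rho>)"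
definition QN' :: "real \<Rightarrow> real" where "QN' \<rho> = ratio' (h \<rho>) * inverse (sg * B (h \<rho>))"

lemma phiN_twice_differentiable:
  "\<forall>s\<in>S ` I. 0 < phiN s \<and> (phiN has_real_derivative phiN' s) (at s)
     \<and> (phiN' has_real_derivative deriv phiN' s) (at s)"
proof
  fix s assume s: "s \<in> S ` I"
  note chain = DERIV_compose_differentiable[of phi phi' f s W, folded phiN_def[abs_def] phiN'_def[abs_def]]
  show "0 < phiN s \<and> (phiN has_real_derivative phiN' s) (at s)
          \<and> (phiN' has_real_derivative deriv phiN' s) (at s)"
    using chain time_change(3,5)[OF s] phi_pos phi_deriv phi'_differentiable W_differentiable
    by (auto simp: phiN_def phiN'_def DERIV_deriv_iff_real_differentiable)
qed

lemma QN_twice_differentiable: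
  "\<forall>\<rho>\<in>H ` J. (QN has_real_derivative QN' \<rho>) (at \<rho>) \<and> (QN' has_real_derivative deriv QN' \<rho>) (at \<rho>)"
proof
  fix \<rho> assume \<rho>: "\<rho> \<in> H ` J"
  note chain = DERIV_compose_differentiable[of ratio ratio' h \<rho> "\<lambda>r. inverse (sg * B r)",
      folded QN_def[abs_def] QN'_def[abs_def]]
  show "(QN has_real_derivative QN' \<rho>) (at \<rho>) \<and> (QN' has_real_derivative deriv QN' \<rho>) (at \<rho>)"
    using chain radial_change(3,4)[OF \<rho>] ratio_deriv ratio'_differentiable inverse_sg_B_differentiable
    by (auto simp: QN'_def DERIV_deriv_iff_real_differentiable)
qed

text \<open>The factor \<open>1\<^sup>2\<close> is the square of the rescaling constant of \<open>x\<close> and \<open>y\<close>: none is needed.\<close>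

lemma metric_normal_form:
  "\<forall>s\<in>S ` I. \<forall>\<rho>\<in>H ` J.
     (\<lambda>i j. if i \<noteq> j then 0
            else if i = 0 then - ((deriv f s)^2 / v (f s))
            else if i = 1 then phi (f s) * (a1 (f s) + a2 (f s) * Q (h \<rho>))^2 * (deriv h \<rho>)^2
            else phi (f s) * 1^2)
     = (\<lambda>i j. metricA phiN QN i j (mkpt s \<rho> 0 0))"
  using metric_time_component metric_radial_component
  by (intro ballI ext) (simp add: metricA_def tco_def rco_def mkpt_def phiN_def QN_def mult.assoc)

end

theorem mainTheorem7:
  shows
  "(\<forall>(I::real set) (J::real set) (phi::real\<Rightarrow>real) phi' phi'' (Q::real\<Rightarrow>real) Q' Q''.
      open I \<and> open J \<and>
      (\<forall>t\<in>I. 0 < phi t \<and> (phi has_real_derivative phi' t) (at t)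
                     \<and> (phi' has_real_derivative phi'' t) (at t)) \<and>
      (\<forall>r\<in>J. (Q has_real_derivative Q' r) (at r) \<and> (Q' has_real_derivative Q'' r) (at r))
      \<longrightarrow>
      (let U = {q. tco q \<in> I \<and> rco q \<in> J \<and> tco q * Q (rco q) + 1 \<noteq> 0} in
         plane_symmetric (metricA phi Q) U \<and>
         perfect_fluid_solution (metricA phi Q) U
           (\<lambda>i q. if i = 0 then phi (tco q) powr (-3/2) else 0)
           (\<lambda>q. let t = tco q; r = rco q in
                  (phi t powr (-3)) * (3/4 * (phi' t)^2 / (phi t)^2
                                     + phi' t * Q r / (phi t * (t * Q r + 1))))
           (\<lambda>q. let t = tco q in
                  (phi t powr (-3)) * (7/4 * (phi' t)^2 / (phi t)^2 - phi'' t / phi t))))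
   \<and>
   (\<forall>(I::real set) (J::real set) (phi::real\<Rightarrow>real) phi' phi'' (v::real\<Rightarrow>real) v'
      (a1::real\<Rightarrow>real) a1' a1'' (a2::real\<Rightarrow>real) a2' a2'' (Q::real\<Rightarrow>real) Q' Q''.
      open I \<and> is_interval I \<and> I \<noteq> {} \<and> open J \<and> is_interval J \<and> J \<noteq> {} \<and>
      (\<forall>t\<in>I. 0 < phi t \<and> 0 < v t
         \<and> (phi has_real_derivative phi' t) (at t) \<and> (phi' has_real_derivative phi'' t) (at t)
         \<and> (v has_real_derivative v' t) (at t)
         \<and> (a1 has_real_derivative a1' t) (at t) \<and> (a1' has_real_derivative a1'' t) (at t)
         \<and> (a2 has_real_derivative a2' t) (at t) \<and> (a2' has_real_derivative a2'' t) (at t)) \<and>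
      (\<forall>r\<in>J. (Q has_real_derivative Q' r) (at r) \<and> (Q' has_real_derivative Q'' r) (at r)) \<and>
      (\<forall>t\<in>I. \<forall>r\<in>J.
         2 * v t * phi t * (a1'' t + a2'' t * Q r)
         + (v' t * phi t + 3 * v t * phi' t) * (a1' t + a2' t * Q r) = 0) \<and>
      \<not> (\<exists>c. \<forall>t\<in>I. a2 t = c) \<and>
      (\<forall>t\<in>I. \<forall>r\<in>J. a1 t + a2 t * Q r \<noteq> 0)
      \<longrightarrow>
      (\<exists>(I'::real set) (J'::real set) (f::real\<Rightarrow>real) (h::real\<Rightarrow>real) (c::real)
         (phiN::real\<Rightarrow>real) phiN' phiN'' (QN::real\<Rightarrow>real) QN' QN''.
         open I' \<and> open J' \<and> bij_betw f I' I \<and> bij_betw h J' J \<and> 0 < c \<and>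
         (\<forall>s\<in>I'. f differentiable (at s) \<and> deriv f s \<noteq> 0) \<and>
         (\<forall>\<rho>\<in>J'. h differentiable (at \<rho>) \<and> deriv h \<rho> \<noteq> 0) \<and>
         (\<forall>s\<in>I'. 0 < phiN s \<and> (phiN has_real_derivative phiN' s) (at s)
                       \<and> (phiN' has_real_derivative phiN'' s) (at s)) \<and>
         (\<forall>\<rho>\<in>J'. (QN has_real_derivative QN' \<rho>) (at \<rho>)
                       \<and> (QN' has_real_derivative QN'' \<rho>) (at \<rho>)) \<and>
         (\<forall>s\<in>I'. \<forall>\<rho>\<in>J'.
            (\<lambda>i j. if i \<noteq> j then 0
                   else if i = 0 then - ((deriv f s)^2 / v (f s))
                   else if i = 1 then phi (f s) * (a1 (f s) + a2 (f s) * Q (h \<rho>))^2 * (deriv h \<rho>)^2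
                   else phi (f s) * c^2)
            = (\<lambda>i j. metricA phiN QN i j (mkpt s \<rho> 0 0) :: real))))"
proof (intro conjI allI impI, goal_cases)
  case (1 I J phi phi' phi'' Q Q' Q'')
  then interpret metricA_data I J phi phi' phi'' Q Q' Q''
    by unfold_locales auto
  show ?case
    using metricA_plane_symmetric metricA_perfect_fluid
    unfolding U_def velocity_def[abs_def] energy_density_def pressure_def by (simp only: Let_def)
next
  case (2 I J phi phi' phi'' v v' a1 a1' a1'' a2 a2' a2'' Q Q' Q'')
  then interpret T_model I J phi phi' phi'' v v' a1 a1' a1'' a2 a2' a2'' Q Q' Q''
    by unfold_locales auto
  show ?case
    using time_change(1,2) radial_change(1,2) time_change_differentiable radial_change_differentiable
      phiN_twice_differentiable QN_twice_differentiable metric_normal_form zero_less_one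
    by blast
qed

end
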